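(* Let $p\in(-1,\infty)$, $\beta\ge0$, and $\gamma_*>0$ satisfy: - $\gamma_*\in[(1+\beta)^{-p},1]$ if $p\ge0$; - $\gamma_*\in[1,(1+\beta)^{-p}]$ if $p\le0$. For $\alpha\in(0,1)$, let $\omega_1^*(\alpha,\gamma_* )$ denote the first component of the unique solution $(\omega_1,\omega_2)$, with $0<\omega_1\le\omega_2$, of the system $$\alpha\,\omega_1+(1-\alpha)\,\omega_2=1+\beta,\qquad \frac{\alpha}{\omega_1^{p+1}}+\frac{1-\alpha}{\omega_2^{p+1}}=\gamma_*.$$ Then $\alpha\mapsto\omega_1^*(\alpha,\gamma_* )$ is non-decreasing on $(0,1)$.
   Context: The system in the claim has, for every $\alpha\in(0,1)$ and every $\beta$, $\gamma_*$ as stated, exactly one solution with $0<\omega_1\le\omega_2$, so $\omega_1^*(\alpha,\gamma_* )$ is well defined. *)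

theory Defs
  imports Complex_Main
begin

definition omega_system :: "real \<Rightarrow> real \<Rightarrow> real \<Rightarrow> real \<Rightarrow> real \<Rightarrow> real \<Rightarrow> bool" where
  "omega_system p \<beta> \<gamma> \<alpha> w1 w2 \<longleftrightarrow>
     0 < w1 \<and> w1 \<le> w2 \<and>
     \<alpha> * w1 + (1 - \<alpha>) * w2 = 1 + \<beta> \<and>
     \<alpha> / w1 powr (p + 1) + (1 - \<alpha>) / w2 powr (p + 1) = \<gamma>"

definition omega1_star :: "real \<Rightarrow> real \<Rightarrow> real \<Rightarrow> real \<Rightarrow> real" where
  "omega1_star p \<beta> \<gamma> \<alpha> = fst (THE w. omega_system p \<beta> \<gamma> \<alpha> (fst w) (snd w))"

end

theory Submission
  imports Defs
begin

text \<open>Write \<open>q = p + 1 > 0\<close> and \<open>B = 1 + \<beta>\<close>. Eliminating \<open>\<omega>\<^sub>2 = (B - \<alpha> \<omega>\<^sub>1) / (1 - \<alpha>)\<close> turns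
  the system into the single equation \<open>G(\<alpha>, \<omega>\<^sub>1) = \<gamma>\<close> on \<open>0 < \<omega>\<^sub>1 \<le> B\<close>, where
  \<open>G(\<alpha>, u) = \<alpha> u\<^sup>-\<^sup>q + (1 - \<alpha>) \<omega>\<^sub>2\<^sup>-\<^sup>q\<close>. Strict convexity of \<open>t \<mapsto> t\<^sup>-\<^sup>q\<close> shows that \<open>G\<close> is
  strictly decreasing in \<open>u\<close> and non-decreasing in \<open>\<alpha>\<close>. Hence the root exists (by the
  intermediate value theorem, using \<open>G(\<alpha>, B) = B\<^sup>-\<^sup>q \<le> \<gamma>\<close>), is unique, and cannot decrease
  when \<open>\<alpha>\<close> grows: a larger \<open>\<alpha>\<close> raises \<open>G\<close>, which must be compensated by a larger \<open>u\<close>.\<close>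

lemma weighted_increments_less:
  fixes f f' :: "real \<Rightarrow> real"
  assumes deriv: "\<And>t. x \<le> t \<Longrightarrow> t \<le> w \<Longrightarrow> (f has_real_derivative f' t) (at t)"
    and deriv_mono: "\<And>s t. x < s \<Longrightarrow> s < t \<Longrightarrow> t < w \<Longrightarrow> f' s < f' t"
    and order: "x < y" "y \<le> z" "z < w"
    and "c > 0" and balance: "c * (y - x) = d * (w - z)"
  shows "c * (f y - f x) < d * (f w - f z)"
proof -
  obtain s where s: "x < s" "s < y" "f y - f x = (y - x) * f' s"
    using MVT2[of x y f f'] order deriv by force
  obtain t where t: "z < t" "t < w" "f w - f z = (w - z) * f' t"
    using MVT2[of z w f f'] order deriv by force
  have "0 < d * (w - z)"
    using balance order \<open>c > 0\<close> by (metis diff_gt_0_iff_gt mult_pos_pos)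
  moreover have "f' s < f' t"
    using deriv_mono s t order by force
  ultimately have "d * (w - z) * f' s < d * (w - z) * f' t"
    by (rule mult_strict_left_mono[rotated])
  also have "\<dots> = d * (f w - f z)"
    unfolding t(3) by (simp only: mult.assoc)
  also have "d * (w - z) * f' s = c * (f y - f x)"
    unfolding s(3) balance[symmetric] by (simp only: mult.assoc)
  finally show ?thesis .
qed

lemma powr_neg_weighted_increments_less:
  fixes q x y z w c d :: real
  assumes "q > 0" "0 < x" "x < y" "y \<le> z" "z < w" "c > 0" "c * (y - x) = d * (w - z)"
  shows "c * (y powr (-q) - x powr (-q)) < d * (w powr (-q) - z powr (-q))"
proof (rule weighted_increments_less[where f = "\<lambda>t. t powr (-q)" and f' = "\<lambda>t. - q * t powr (- q - 1)"])
  show "((\<lambda>t. t powr (-q)) has_real_derivative - q * t powr (- q - 1)) (at t)"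
    if "x \<le> t" for t
    using has_real_derivative_powr[of t "-q"] that \<open>0 < x\<close> by simp
  show "- q * s powr (- q - 1) < - q * t powr (- q - 1)" if "x < s" "s < t" for s t
    using powr_less_mono2_neg[of "- q - 1" s t] that assms(1,2) by simp
qed (use assms in auto)

definition omega2_of :: "real \<Rightarrow> real \<Rightarrow> real \<Rightarrow> real" where
  "omega2_of B \<alpha> u = (B - \<alpha> * u) / (1 - \<alpha>)"

definition gamma_of :: "real \<Rightarrow> real \<Rightarrow> real \<Rightarrow> real \<Rightarrow> real" where
  "gamma_of q B \<alpha> u = \<alpha> * u powr (-q) + (1 - \<alpha>) * omega2_of B \<alpha> u powr (-q)"

lemma omega2_of_balance: "\<alpha> < 1 \<Longrightarrow> (1 - \<alpha>) * omega2_of B \<alpha> u = B - \<alpha> * u"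
  by (simp add: omega2_of_def)

lemma omega2_of_self: "\<alpha> < 1 \<Longrightarrow> omega2_of B \<alpha> B = B"
  by (simp add: omega2_of_def field_simps)

lemma le_omega2_of:
  assumes "0 < \<alpha>" "\<alpha> < 1" "u \<le> B"
  shows "B \<le> omega2_of B \<alpha> u"
proof -
  have "(1 - \<alpha>) * B \<le> B - \<alpha> * u"
    using assms by (simp add: algebra_simps)
  then show ?thesis
    using assms by (simp add: omega2_of_def pos_le_divide_eq mult.commute)
qed

lemma omega_system_iff:
  assumes "0 < \<alpha>" "\<alpha> < 1"
  shows "omega_system p \<beta> \<gamma> \<alpha> w1 w2 \<longleftrightarrow>
    0 < w1 \<and> w1 \<le> 1 + \<beta> \<and> w2 = omega2_of (1 + \<beta>) \<alpha> w1 \<and> gamma_of (p + 1) (1 + \<beta>) \<alpha> w1 = \<gamma>"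
proof -
  have linear: "\<alpha> * w1 + (1 - \<alpha>) * w2 = 1 + \<beta> \<longleftrightarrow> w2 = omega2_of (1 + \<beta>) \<alpha> w1"
    using assms by (auto simp: omega2_of_def field_simps)
  have order: "w1 \<le> w2 \<longleftrightarrow> w1 \<le> 1 + \<beta>" if "w2 = omega2_of (1 + \<beta>) \<alpha> w1"
  proof -
    have "w1 \<le> w2 \<longleftrightarrow> (1 - \<alpha>) * w1 \<le> (1 - \<alpha>) * w2"
      using assms by simp
    also have "\<dots> \<longleftrightarrow> w1 \<le> 1 + \<beta>"
      using omega2_of_balance[OF assms(2), of "1 + \<beta>" w1] that by (auto simp: algebra_simps)
    finally show ?thesis .
  qed
  have "c / t powr (p + 1) = c * t powr (- (p + 1))" for c t :: real
    by (subst powr_minus_divide) simp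
  then show ?thesis
    unfolding omega_system_def gamma_of_def using linear order by auto
qed

lemma gamma_of_strict_antimono:
  assumes "q > 0" "0 < \<alpha>" "\<alpha> < 1" "0 < x" "x < y" "y \<le> B"
  shows "gamma_of q B \<alpha> y < gamma_of q B \<alpha> x"
proof -
  define vx vy where "vx = omega2_of B \<alpha> x" and "vy = omega2_of B \<alpha> y"
  have "y \<le> vy"
    using le_omega2_of[of \<alpha> y B] assms by (simp add: vy_def)
  moreover have balance: "\<alpha> * (y - x) = (1 - \<alpha>) * (vx - vy)"
    using omega2_of_balance[of \<alpha> B x] omega2_of_balance[of \<alpha> B y] assms
    by (simp add: vx_def vy_def algebra_simps)
  moreover have "vy < vx"
    using balance assms by (metis diff_gt_0_iff_gt mult_pos_pos zero_less_mult_pos)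
  ultimately have "\<alpha> * (y powr (-q) - x powr (-q)) < (1 - \<alpha>) * (vx powr (-q) - vy powr (-q))"
    using powr_neg_weighted_increments_less[of q x y vy vx \<alpha> "1 - \<alpha>"] assms by simp
  then show ?thesis
    by (simp add: gamma_of_def vx_def[symmetric] vy_def[symmetric] algebra_simps)
qed

lemma gamma_of_mono_weight:
  assumes "q > 0" "0 < u" "u \<le> B" "0 < \<alpha>" "\<alpha> \<le> \<alpha>'" "\<alpha>' < 1"
  shows "gamma_of q B \<alpha> u \<le> gamma_of q B \<alpha>' u"
proof (cases "u = B \<or> \<alpha> = \<alpha>'")
  case True
  then show ?thesis
    using assms by (auto simp: gamma_of_def omega2_of_self algebra_simps)
next
  case False
  then have "\<alpha> < \<alpha>'"
    using assms by simp
  define v v' where "v = omega2_of B \<alpha> u" and "v' = omega2_of B \<alpha>' u"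
  have "u < v"
    using le_omega2_of[of \<alpha> u B] False assms by (simp add: v_def)
  moreover have balance: "(\<alpha>' - \<alpha>) * (v - u) = (1 - \<alpha>') * (v' - v)"
    using omega2_of_balance[of \<alpha> B u] omega2_of_balance[of \<alpha>' B u] assms
    by (simp add: v_def v'_def algebra_simps)
  moreover have "v < v'"
    using balance \<open>u < v\<close> \<open>\<alpha> < \<alpha>'\<close> assms by (metis diff_gt_0_iff_gt mult_pos_pos zero_less_mult_pos)
  ultimately have "(\<alpha>' - \<alpha>) * (v powr (-q) - u powr (-q)) < (1 - \<alpha>') * (v' powr (-q) - v powr (-q))"
    using powr_neg_weighted_increments_less[of q u v v v' "\<alpha>' - \<alpha>" "1 - \<alpha>'"] \<open>\<alpha> < \<alpha>'\<close> assms
    by simp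
  then show ?thesis
    by (simp add: gamma_of_def v_def[symmetric] v'_def[symmetric] algebra_simps)
qed

lemma gamma_of_root_exists:
  assumes "q > 0" "B > 0" "0 < \<alpha>" "\<alpha> < 1" "\<gamma> > 0" "B powr (-q) \<le> \<gamma>"
  shows "\<exists>u. 0 < u \<and> u \<le> B \<and> gamma_of q B \<alpha> u = \<gamma>"
proof -
  define r where "r = (\<alpha> / \<gamma>) powr (1 / q)"
  define u0 where "u0 = min B r"
  have "u0 > 0" "u0 \<le> B"
    using assms by (auto simp: u0_def r_def)
  have "\<gamma> = \<alpha> * r powr (-q)"
    using assms by (simp add: r_def powr_powr powr_minus_divide)
  also have "\<dots> \<le> \<alpha> * u0 powr (-q)"
    using powr_mono2'[of "-q" u0 r] assms \<open>u0 > 0\<close> by (simp add: u0_def)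
  also have "\<dots> \<le> gamma_of q B \<alpha> u0"
    using assms by (simp add: gamma_of_def)
  finally have "\<gamma> \<le> gamma_of q B \<alpha> u0" .
  moreover have "gamma_of q B \<alpha> B \<le> \<gamma>"
    using assms by (simp add: gamma_of_def omega2_of_self algebra_simps)
  moreover have "continuous_on {u0..B} (gamma_of q B \<alpha>)"
  proof -
    have "0 < omega2_of B \<alpha> u" if "u \<le> B" for u
      using le_omega2_of[of \<alpha> u B] that assms by linarith
    then have "continuous_on {u0..B} (\<lambda>u. \<alpha> * u powr (-q) + (1 - \<alpha>) * ((B - \<alpha> * u) / (1 - \<alpha>)) powr (-q))"
      using \<open>u0 > 0\<close> \<open>\<alpha> < 1\<close> by (intro continuous_intros) (auto simp: omega2_of_def)
    then show ?thesis
      by (simp add: gamma_of_def omega2_of_def[abs_def])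
  qed
  ultimately obtain u where "u0 \<le> u" "u \<le> B" "gamma_of q B \<alpha> u = \<gamma>"
    using IVT2'[of "gamma_of q B \<alpha>" B \<gamma> u0] \<open>u0 \<le> B\<close> by auto
  then show ?thesis
    using \<open>u0 > 0\<close> by (intro exI[of _ u]) auto
qed

lemma gamma_of_root_mono_weight:
  assumes "q > 0" "0 < \<alpha>" "\<alpha> \<le> \<alpha>'" "\<alpha>' < 1" "0 < u'" "u \<le> B"
    and "gamma_of q B \<alpha> u = gamma_of q B \<alpha>' u'"
  shows "u \<le> u'"
proof (rule ccontr)
  assume "\<not> u \<le> u'"
  then have "gamma_of q B \<alpha>' u < gamma_of q B \<alpha>' u'"
    using gamma_of_strict_antimono[of q \<alpha>' u' u B] assms by auto
  moreover have "gamma_of q B \<alpha> u \<le> gamma_of q B \<alpha>' u"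
    using gamma_of_mono_weight[of q u B \<alpha> \<alpha>'] \<open>\<not> u \<le> u'\<close> assms by auto
  ultimately show False
    using assms(7) by simp
qed

lemma omega1_star_root:
  assumes "p + 1 > 0" "1 + \<beta> > 0" "0 < \<alpha>" "\<alpha> < 1" "\<gamma> > 0" "(1 + \<beta>) powr (-(p + 1)) \<le> \<gamma>"
  shows "0 < omega1_star p \<beta> \<gamma> \<alpha> \<and> omega1_star p \<beta> \<gamma> \<alpha> \<le> 1 + \<beta> \<and>
    gamma_of (p + 1) (1 + \<beta>) \<alpha> (omega1_star p \<beta> \<gamma> \<alpha>) = \<gamma>"
proof -
  obtain u where u: "0 < u" "u \<le> 1 + \<beta>" "gamma_of (p + 1) (1 + \<beta>) \<alpha> u = \<gamma>"
    using gamma_of_root_exists assms by blast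
  have unique: "v = u" if "0 < v" "v \<le> 1 + \<beta>" "gamma_of (p + 1) (1 + \<beta>) \<alpha> v = \<gamma>" for v
    using gamma_of_strict_antimono[of "p + 1" \<alpha> u v "1 + \<beta>"]
      gamma_of_strict_antimono[of "p + 1" \<alpha> v u "1 + \<beta>"] that u assms
    by (cases u v rule: linorder_cases) auto
  have "omega_system p \<beta> \<gamma> \<alpha> (fst w) (snd w) \<longleftrightarrow> w = (u, omega2_of (1 + \<beta>) \<alpha> u)" for w
  proof -
    have "omega_system p \<beta> \<gamma> \<alpha> w1 w2 \<longleftrightarrow> w1 = u \<and> w2 = omega2_of (1 + \<beta>) \<alpha> u" for w1 w2
      using omega_system_iff[OF assms(3,4)] unique u by blast
    then show ?thesis
      by (cases w) simp
  qed
  then have "omega1_star p \<beta> \<gamma> \<alpha> = u"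
    unfolding omega1_star_def by (simp add: the_equality)
  then show ?thesis
    using u by simp
qed

theorem mainTheorem7:
  fixes p \<beta> \<gamma> :: real
  assumes "p > -1" and "\<beta> \<ge> 0" and "\<gamma> > 0"
    and "p \<ge> 0 \<Longrightarrow> (1 + \<beta>) powr (-p) \<le> \<gamma> \<and> \<gamma> \<le> 1"
    and "p \<le> 0 \<Longrightarrow> 1 \<le> \<gamma> \<and> \<gamma> \<le> (1 + \<beta>) powr (-p)"
  shows "mono_on {0<..<1} (omega1_star p \<beta> \<gamma>)"
proof (rule mono_onI)
  have "(1 + \<beta>) powr (-(p + 1)) \<le> (1 + \<beta>) powr (if p \<ge> 0 then -p else 0)"
    using assms(1,2) by (intro powr_mono) auto
  then have bound: "(1 + \<beta>) powr (-(p + 1)) \<le> \<gamma>"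
    using assms(2,4,5) by (auto split: if_splits)
  have root: "0 < omega1_star p \<beta> \<gamma> \<alpha> \<and> omega1_star p \<beta> \<gamma> \<alpha> \<le> 1 + \<beta> \<and>
      gamma_of (p + 1) (1 + \<beta>) \<alpha> (omega1_star p \<beta> \<gamma> \<alpha>) = \<gamma>" if "\<alpha> \<in> {0<..<1}" for \<alpha>
    using omega1_star_root[of p \<beta> \<alpha> \<gamma>] bound assms(1-3) that by auto
  fix \<alpha> \<alpha>' :: real
  assume \<alpha>: "\<alpha> \<in> {0<..<1}" "\<alpha>' \<in> {0<..<1}" "\<alpha> \<le> \<alpha>'"
  show "omega1_star p \<beta> \<gamma> \<alpha> \<le> omega1_star p \<beta> \<gamma> \<alpha>'"
    by (rule gamma_of_root_mono_weight[where q = "p + 1" and B = "1 + \<beta>" and \<alpha> = \<alpha> and \<alpha>' = \<alpha>'])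
      (use root[OF \<alpha>(1)] root[OF \<alpha>(2)] \<alpha> assms(1) in auto)
qed

end
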